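(* If $C$ is a binary linear constant weight code of dimension at least $2$, then $|\mathrm{PAut}(C)|$ is a multiple of $6$.
   Context: A binary linear constant weight code of weight $w$ is an $\mathbb{F}_2$-subspace of $\mathbb{F}_2^n$ all of whose non-zero vectors have exactly $w$ coordinates equal to $1$. $S_n$ acts on $\mathbb{F}_2^n$ by permuting coordinates, $\sigma(v_1,\dots,v_n)=(v_{\sigma^{-1}(1)},\dots,v_{\sigma^{-1}(n)})$, and $\mathrm{PAut}(C)=\{\sigma\in S_n:\sigma(C)=C\}$. *)

theory Defs
  imports "HOL-Analysis.Analysis" "HOL-Library.Z2"
begin

text \<open>Vectors of F_2^n are modelled as bit ^ 'n, the coordinate set being the
  finite type 'n (with n = CARD('n)).\<close>

definition hweight :: "bit ^ 'n \<Rightarrow> nat" where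
  "hweight v = card {i. v $ i \<noteq> 0}"

definition linear_constant_weight_code :: "(bit ^ 'n) set \<Rightarrow> nat \<Rightarrow> bool" where
  "linear_constant_weight_code C w \<longleftrightarrow>
     vec.subspace C \<and> (\<forall>v\<in>C. v \<noteq> 0 \<longrightarrow> hweight v = w)"

definition perm_act :: "('n \<Rightarrow> 'n) \<Rightarrow> bit ^ 'n \<Rightarrow> bit ^ 'n" where
  "perm_act \<sigma> v = (\<chi> i. v $ (inv \<sigma> i))"

definition PAut :: "(bit ^ 'n) set \<Rightarrow> ('n \<Rightarrow> 'n) set" where
  "PAut C = {\<sigma>. \<sigma> permutes (UNIV :: 'n set) \<and> perm_act \<sigma> ` C = C}"

end

theory Submission
  imports Defs "HOL-Algebra.Multiplicative_Group"
begin

text \<open>For a nonzero linear functional \<open>\<phi>\<close> on \<open>C\<close>, double counting the weights of the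
  codewords with \<open>\<phi> v = 1\<close> shows that exactly \<open>2 w - |supp C|\<close> coordinates \<open>i\<close> satisfy
  \<open>v\<^sub>i = \<phi> v\<close> for all \<open>v \<in> C\<close>. So the coordinates of the support fall into classes of
  equal size, one for each nonzero functional, and a linear automorphism \<open>B\<close> of \<open>C\<close>
  of order \<open>k\<close> is induced by a coordinate permutation of order dividing \<open>k\<close> that moves the
  class of \<open>\<phi>\<close> onto the class of \<open>\<phi> \<circ> B\<close>. Two distinct nonzero codewords \<open>a\<close>, \<open>b\<close> have
  intersecting supports, neither containing the other; for \<open>a\<^sub>p = 0\<close>, \<open>b\<^sub>p = 1\<close> and
  \<open>a\<^sub>q = b\<^sub>q = 1\<close>, the maps \<open>v \<mapsto> v + v\<^sub>p a\<close> and \<open>v \<mapsto> v + v\<^sub>p a + v\<^sub>q b\<close> are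
  automorphisms of \<open>C\<close> of order 2 and 3, so \<open>PAut C\<close> has elements of order 2 and 3.\<close>

instance bit :: finite
proof
  have "UNIV = {0 :: bit, 1}"
    by (auto intro: bit.exhaust)
  then show "finite (UNIV :: bit set)"
    by (metis finite.emptyI finite_insert)
qed

lemma bit_add_eq_1_iff: "(x :: bit) + y = 1 \<longleftrightarrow> x \<noteq> y"
  by (cases x; cases y) simp_all

lemma vec_bit_add_self [simp]: "(v :: bit ^ 'n) + v = 0"
proof -
  have "(x :: bit) + x = 0" for x
    by (cases x) simp_all
  then show ?thesis
    by (simp add: vec_eq_iff)
qed

lemma restrict_eq_restrict_iff: "restrict f A = restrict g A \<longleftrightarrow> (\<forall>x\<in>A. f x = g x)"
  by (metis restrict_apply' restrict_ext)

lemma card_filter_split: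
  assumes "finite A"
  shows "card {x\<in>A. P x} = card {x\<in>A. P x \<and> Q x} + card {x\<in>A. P x \<and> \<not> Q x}"
proof -
  have "{x\<in>A. P x} = {x\<in>A. P x \<and> Q x} \<union> {x\<in>A. P x \<and> \<not> Q x}"
    by blast
  then show ?thesis
    using assms by (simp add: card_Un_disjoint disjoint_iff)
qed

section \<open>The permutation automorphism group\<close>

lemma prime_dvd_card_perm_group:
  fixes S :: "('a \<Rightarrow> 'a) set"
  assumes id: "id \<in> S" and bij: "\<And>f. f \<in> S \<Longrightarrow> bij f"
    and comp: "\<And>f g. f \<in> S \<Longrightarrow> g \<in> S \<Longrightarrow> f \<circ> g \<in> S"
    and inv: "\<And>f. f \<in> S \<Longrightarrow> Hilbert_Choice.inv f \<in> S"
    and s: "s \<in> S" "s ^^ p = id" "s \<noteq> id" and p: "prime p"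
  shows "p dvd card S"
proof -
  define G :: "('a \<Rightarrow> 'a) monoid" where "G = \<lparr>carrier = S, mult = (\<circ>), one = id\<rparr>"
  interpret group G
    unfolding G_def
  proof (rule groupI, simp_all add: id comp o_assoc)
    fix f assume "f \<in> S"
    then show "\<exists>g\<in>S. g \<circ> f = id"
      using inv bij by (metis bij_is_inj inv_o_cancel)
  qed
  have pow: "s [^]\<^bsub>G\<^esub> n = s ^^ n" for n
    by (induction n) (simp_all add: G_def funpow_Suc_right del: funpow.simps)
  have s_carrier: "s \<in> carrier G"
    using s by (simp add: G_def)
  have "ord s dvd p"
    using pow_eq_id[OF s_carrier, of p] pow s by (simp add: G_def)
  moreover have "ord s \<noteq> 1"
    using ord_eq_1[OF s_carrier] s by (simp add: G_def)
  ultimately have "ord s = p"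
    using p prime_nat_iff by blast
  then show ?thesis
    using ord_dvd_group_order[OF s_carrier] by (simp add: order_def G_def)
qed

lemma perm_act_id: "perm_act id v = v"
  by (simp add: perm_act_def)

lemma perm_act_comp:
  "bij f \<Longrightarrow> bij g \<Longrightarrow> perm_act (f \<circ> g) v = perm_act f (perm_act g v)"
  by (simp add: perm_act_def o_inv_distrib)

lemma PAut_id: "id \<in> PAut C"
  by (simp add: PAut_def permutes_id perm_act_id)

lemma PAut_bij: "f \<in> PAut C \<Longrightarrow> bij f"
  by (auto simp: PAut_def intro: permutes_bij)

lemma PAut_comp:
  assumes "f \<in> PAut C" "g \<in> PAut C"
  shows "f \<circ> g \<in> PAut C"
proof -
  have "perm_act (f \<circ> g) ` C = perm_act f ` (perm_act g ` C)"
    using perm_act_comp[OF PAut_bij PAut_bij, OF assms] by (simp add: image_image)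
  also have "\<dots> = C"
    using assms by (simp add: PAut_def)
  finally show ?thesis
    using assms by (simp add: PAut_def permutes_compose)
qed

lemma PAut_inv:
  assumes "f \<in> PAut C"
  shows "Hilbert_Choice.inv f \<in> PAut C"
proof -
  have f: "bij f"
    using assms by (rule PAut_bij)
  have "perm_act (Hilbert_Choice.inv f) (perm_act f v) = v" for v
    using perm_act_comp[OF bij_imp_bij_inv[OF f] f, of v] inv_o_cancel[OF bij_is_inj[OF f]]
    by (simp add: perm_act_id)
  then have "C = perm_act (Hilbert_Choice.inv f) ` (perm_act f ` C)"
    by (simp add: image_image)
  also have "\<dots> = perm_act (Hilbert_Choice.inv f) ` C"
    using assms by (simp add: PAut_def)
  finally show ?thesis
    using assms by (simp add: PAut_def permutes_inv)
qed

lemma prime_dvd_card_PAut: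
  assumes "\<sigma> \<in> PAut C" "\<sigma> ^^ p = id" "\<sigma> \<noteq> id" "prime p"
  shows "p dvd card (PAut C)"
  using prime_dvd_card_perm_group[OF PAut_id PAut_bij PAut_comp PAut_inv assms] .

section \<open>Coordinate classes of a constant weight code\<close>

definition code_support :: "(bit ^ 'n) set \<Rightarrow> 'n set" where
  "code_support C = {i. \<exists>v\<in>C. v $ i = 1}"

definition coord_class :: "(bit ^ 'n) set \<Rightarrow> (bit ^ 'n \<Rightarrow> bit) \<Rightarrow> 'n set" where
  "coord_class C \<phi> = {i. \<forall>v\<in>C. v $ i = \<phi> v}"

lemma hweight_eq_card_ones: "hweight v = card {i. v $ i = 1}"
  by (simp add: hweight_def)

lemma hweight_eq_0_iff: "hweight v = 0 \<longleftrightarrow> v = 0"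
  by (auto simp: hweight_def vec_eq_iff)

lemma sum_hweight:
  fixes X :: "(bit ^ 'n) set"
  shows "(\<Sum>v\<in>X. hweight v) = (\<Sum>i\<in>UNIV. card {v\<in>X. v $ i = 1})"
  using sum.swap_restrict[of X UNIV "\<lambda>_ _. 1 :: nat" "\<lambda>v i. v $ i = 1"]
  by (simp add: hweight_eq_card_ones)

lemma card_ones_of_functional:
  fixes C :: "(bit ^ 'n) set" and \<phi> :: "bit ^ 'n \<Rightarrow> bit"
  assumes sub: "vec.subspace C"
    and additive: "\<And>u v. u \<in> C \<Longrightarrow> v \<in> C \<Longrightarrow> \<phi> (u + v) = \<phi> u + \<phi> v"
    and u: "u \<in> C" "\<phi> u = 1"
  shows "2 * card {v\<in>C. \<phi> v = 1} = card C"
proof -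
  let ?X0 = "{v\<in>C. \<phi> v = 0}" and ?X1 = "{v\<in>C. \<phi> v = 1}"
  have closed: "v + u \<in> C" if "v \<in> C" for v
    using sub that u(1) by (rule vec.subspace_add)
  have shift: "\<phi> (v + u) = \<phi> v + 1" if "v \<in> C" for v
    using additive[OF that u(1)] u(2) by simp
  have involutive: "v + u + u = v" for v
    by (simp add: add.assoc)
  have "bij_betw (\<lambda>v. v + u) ?X0 ?X1"
    by (rule bij_betwI[where g = "\<lambda>v. v + u"]) (use closed shift involutive in auto)
  then have "card ?X0 = card ?X1"
    by (rule bij_betw_same_card)
  moreover have "card C = card ?X0 + card ?X1"
    using card_filter_split[of C "\<lambda>_. True" "\<lambda>v. \<phi> v = 0"] by simp
  ultimately show ?thesis
    by simp
qed

lemma card_ones_of_two_functionals: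
  fixes C :: "(bit ^ 'n) set" and \<phi> \<psi> :: "bit ^ 'n \<Rightarrow> bit"
  assumes sub: "vec.subspace C"
    and \<phi>: "\<And>u v. u \<in> C \<Longrightarrow> v \<in> C \<Longrightarrow> \<phi> (u + v) = \<phi> u + \<phi> v"
    and \<psi>: "\<And>u v. u \<in> C \<Longrightarrow> v \<in> C \<Longrightarrow> \<psi> (u + v) = \<psi> u + \<psi> v"
    and x: "x \<in> C" "\<phi> x = 1" and y: "y \<in> C" "\<psi> y = 1" and z: "z \<in> C" "\<phi> z \<noteq> \<psi> z"
  shows "4 * card {v\<in>C. \<phi> v = 1 \<and> \<psi> v = 1} = card C"
proof -
  let ?both = "{v\<in>C. \<phi> v = 1 \<and> \<psi> v = 1}"
    and ?only_\<phi> = "{v\<in>C. \<phi> v = 1 \<and> \<psi> v \<noteq> 1}"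
    and ?only_\<psi> = "{v\<in>C. \<psi> v = 1 \<and> \<phi> v \<noteq> 1}"
  have "2 * card {v\<in>C. \<phi> v = 1} = card C"
    using card_ones_of_functional[OF sub \<phi> x] .
  moreover have "2 * card {v\<in>C. \<psi> v = 1} = card C"
    using card_ones_of_functional[OF sub \<psi> y] .
  moreover have "2 * card {v\<in>C. \<phi> v + \<psi> v = 1} = card C"
  proof (rule card_ones_of_functional[OF sub _ z(1)])
    show "\<phi> (u + v) + \<psi> (u + v) = \<phi> u + \<psi> u + (\<phi> v + \<psi> v)" if "u \<in> C" "v \<in> C" for u v
      by (simp only: \<phi>[OF that] \<psi>[OF that] ac_simps)
    show "\<phi> z + \<psi> z = 1"
      using z(2) bit_add_eq_1_iff by blast
  qed
  moreover have "card {v\<in>C. \<phi> v = 1} = card ?both + card ?only_\<phi>"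
    by (rule card_filter_split) simp
  moreover have "card {v\<in>C. \<psi> v = 1} = card ?both + card ?only_\<psi>"
    using card_filter_split[of C "\<lambda>v. \<psi> v = 1" "\<lambda>v. \<phi> v = 1"] by (simp add: conj_commute)
  moreover have "card {v\<in>C. \<phi> v + \<psi> v = 1} = card ?only_\<phi> + card ?only_\<psi>"
  proof -
    have "{v\<in>C. \<phi> v + \<psi> v = 1} = ?only_\<phi> \<union> ?only_\<psi>"
      by (auto simp: bit_add_eq_1_iff)
    then show ?thesis
      by (simp add: card_Un_disjoint disjoint_iff)
  qed
  ultimately show ?thesis
    by linarith
qed

text \<open>A coordinate contributes to the weights of the codewords on which \<open>\<phi>\<close> is \<open>1\<close>
  with all of them if it realises \<open>\<phi>\<close>, with none if it lies outside the support, and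
  with half of them otherwise.\<close>

lemma card_ones_at_coord:
  fixes C :: "(bit ^ 'n) set" and \<phi> :: "bit ^ 'n \<Rightarrow> bit"
  assumes sub: "vec.subspace C"
    and additive: "\<And>u v. u \<in> C \<Longrightarrow> v \<in> C \<Longrightarrow> \<phi> (u + v) = \<phi> u + \<phi> v"
    and u: "u \<in> C" "\<phi> u = 1"
  shows "4 * card {v\<in>C. \<phi> v = 1 \<and> v $ i = 1}
    = card C * (of_bool (i \<in> coord_class C \<phi>) + of_bool (i \<in> code_support C))"
proof -
  have half: "2 * card {v\<in>C. \<phi> v = 1} = card C"
    using card_ones_of_functional[OF sub additive u] .
  consider "i \<in> coord_class C \<phi>" | "i \<notin> code_support C"
    | "i \<notin> coord_class C \<phi>" "i \<in> code_support C"
    by blast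
  then show ?thesis
  proof cases
    case 1
    then have "i \<in> code_support C"
      using u by (auto simp: coord_class_def code_support_def)
    moreover have "{v\<in>C. \<phi> v = 1 \<and> v $ i = 1} = {v\<in>C. \<phi> v = 1}"
      using 1 by (auto simp: coord_class_def)
    ultimately show ?thesis
      using 1 half by simp
  next
    case 2
    then have "{v\<in>C. \<phi> v = 1 \<and> v $ i = 1} = {}"
      by (auto simp: code_support_def)
    moreover have "i \<notin> coord_class C \<phi>"
      using 2 u by (auto simp: coord_class_def code_support_def)
    ultimately show ?thesis
      using 2 by simp
  next
    case 3
    obtain y where y: "y \<in> C" "y $ i = 1"
      using 3 by (auto simp: code_support_def)
    obtain z where z: "z \<in> C" "\<phi> z \<noteq> z $ i"
      using 3 by (auto simp: coord_class_def)
    have "4 * card {v\<in>C. \<phi> v = 1 \<and> v $ i = 1} = card C"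
      using card_ones_of_two_functionals[where \<psi> = "\<lambda>v. v $ i",
          OF sub additive vector_add_component u y z] .
    then show ?thesis
      using 3 by simp
  qed
qed

lemma card_coord_class:
  fixes C :: "(bit ^ 'n) set" and \<phi> :: "bit ^ 'n \<Rightarrow> bit"
  assumes code: "linear_constant_weight_code C w"
    and additive: "\<And>u v. u \<in> C \<Longrightarrow> v \<in> C \<Longrightarrow> \<phi> (u + v) = \<phi> u + \<phi> v"
    and u: "u \<in> C" "\<phi> u = 1"
  shows "card (coord_class C \<phi>) + card (code_support C) = 2 * w"
proof -
  have sub: "vec.subspace C" and weight: "\<And>v. v \<in> C \<Longrightarrow> v \<noteq> 0 \<Longrightarrow> hweight v = w"
    using code by (auto simp: linear_constant_weight_code_def)
  let ?X = "{v\<in>C. \<phi> v = 1}"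
  have "\<phi> 0 = 0"
    using additive[of 0 0] vec.subspace_0[OF sub] by simp
  then have "hweight v = w" if "v \<in> ?X" for v
    using that weight by fastforce
  then have "card C * (2 * w) = 4 * (\<Sum>v\<in>?X. hweight v)"
    by (simp add: algebra_simps flip: card_ones_of_functional[OF sub additive u])
  also have "\<dots> = (\<Sum>i\<in>UNIV. 4 * card {v\<in>C. \<phi> v = 1 \<and> v $ i = 1})"
    by (simp only: sum_hweight sum_distrib_left mem_Collect_eq conj_assoc)
  also have "\<dots> = card C * (card (coord_class C \<phi>) + card (code_support C))"
    by (simp add: card_ones_at_coord[OF sub additive u] sum.distrib flip: sum_distrib_left)
  finally show ?thesis
    using u(1) by auto
qed

lemma coord_class_nonempty:
  fixes C :: "(bit ^ 'n) set" and \<phi> :: "bit ^ 'n \<Rightarrow> bit"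
  assumes code: "linear_constant_weight_code C w"
    and additive: "\<And>u v. u \<in> C \<Longrightarrow> v \<in> C \<Longrightarrow> \<phi> (u + v) = \<phi> u + \<phi> v"
    and u: "u \<in> C" "\<phi> u = 1"
  shows "coord_class C \<phi> \<noteq> {}"
proof -
  have "\<phi> 0 = 0"
    using additive[of 0 0] code
    by (simp add: linear_constant_weight_code_def vec.subspace_0)
  then obtain i where i: "u $ i = 1"
    using u(2) by (metis vec_eq_iff zero_index bit_not_zero_iff)
  have "card (coord_class C \<phi>) = card (coord_class C (\<lambda>v. v $ i))"
    using card_coord_class[OF code additive u]
      card_coord_class[where \<phi> = "\<lambda>v. v $ i", OF code vector_add_component u(1) i]
    by simp
  moreover have "i \<in> coord_class C (\<lambda>v. v $ i)"
    by (simp add: coord_class_def)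
  ultimately show ?thesis
    by (metis card.empty card_gt_0_iff empty_iff finite)
qed

definition coord_fun :: "(bit ^ 'n) set \<Rightarrow> 'n \<Rightarrow> bit ^ 'n \<Rightarrow> bit" where
  "coord_fun C i = restrict (\<lambda>v. v $ i) C"

lemma coord_fun_fiber:
  fixes C :: "(bit ^ 'n) set" and \<phi> :: "bit ^ 'n \<Rightarrow> bit"
  assumes "u \<in> C" "\<phi> u = 1"
  shows "{l \<in> code_support C. coord_fun C l = restrict \<phi> C} = coord_class C \<phi>"
  using assms
  by (auto simp: coord_fun_def restrict_eq_restrict_iff coord_class_def code_support_def)

section \<open>Lifting linear automorphisms to coordinate permutations\<close>

lemma periodic_map_image_eq:
  assumes closed: "\<And>x. x \<in> A \<Longrightarrow> f x \<in> A"
    and periodic: "\<And>x. x \<in> A \<Longrightarrow> (f ^^ n) x = x" and "n > 0"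
  shows "f ` A = A"
proof
  show "f ` A \<subseteq> A"
    using closed by blast
  show "A \<subseteq> f ` A"
  proof
    fix x assume x: "x \<in> A"
    have "(f ^^ m) x \<in> A" for m
      by (induction m) (simp_all add: x closed)
    have "x = (f ^^ Suc (n - 1)) x"
      using periodic[OF x] \<open>n > 0\<close> by simp
    also have "\<dots> = f ((f ^^ (n - 1)) x)"
      by simp
    finally show "x \<in> f ` A"
      using \<open>(f ^^ (n - 1)) x \<in> A\<close> by (rule image_eqI)
  qed
qed

lemma bij_if_funpow_eq_id:
  assumes "f ^^ n = id" "n > 0"
  shows "bij f"
proof (rule o_bij)
  have "f ^^ Suc (n - 1) = id"
    using assms by simp
  then show "f ^^ (n - 1) \<circ> f = id" and "f \<circ> f ^^ (n - 1) = id"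
    by (simp only: funpow_Suc_right, simp only: funpow.simps(2))
qed

lemma funpow_restrict_pullback:
  assumes closed: "\<And>x. x \<in> A \<Longrightarrow> f x \<in> A"
  shows "((\<lambda>\<psi>. restrict (\<lambda>x. \<psi> (f x)) A) ^^ n) (restrict g A) = restrict (\<lambda>x. g ((f ^^ n) x)) A"
proof (induction n)
  case (Suc n)
  have "((\<lambda>\<psi>. restrict (\<lambda>x. \<psi> (f x)) A) ^^ Suc n) (restrict g A)
      = restrict (\<lambda>x. restrict (\<lambda>x. g ((f ^^ n) x)) A (f x)) A"
    using Suc.IH by (simp only: funpow.simps(2) comp_apply)
  also have "\<dots> = restrict (\<lambda>x. g ((f ^^ Suc n) x)) A"
    by (rule restrict_ext) (simp add: closed funpow_Suc_right del: funpow.simps)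
  finally show ?case .
qed simp

text \<open>Enumerate every class by \<open>{0..<m}\<close>, \<open>m\<close> the common class size, and send the
  \<open>l\<close>-th element of the class labelled \<open>b\<close> to the \<open>l\<close>-th element of the class labelled
  \<open>\<tau> b\<close>.\<close>

lemma lift_label_map_to_perm:
  fixes \<kappa> :: "'a \<Rightarrow> 'b" and \<tau> :: "'b \<Rightarrow> 'b"
  assumes "finite S"
    and same_card: "\<And>i j. i \<in> S \<Longrightarrow> j \<in> S \<Longrightarrow>
      card {l\<in>S. \<kappa> l = \<kappa> i} = card {l\<in>S. \<kappa> l = \<kappa> j}"
    and closed: "\<And>i. i \<in> S \<Longrightarrow> \<exists>j\<in>S. \<kappa> j = \<tau> (\<kappa> i)"
    and periodic: "\<And>i. i \<in> S \<Longrightarrow> (\<tau> ^^ k) (\<kappa> i) = \<kappa> i"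
  obtains \<sigma> where "\<And>i. i \<in> S \<Longrightarrow> \<sigma> i \<in> S \<and> \<kappa> (\<sigma> i) = \<tau> (\<kappa> i)"
    and "\<And>i. i \<notin> S \<Longrightarrow> \<sigma> i = i" and "\<sigma> ^^ k = id"
proof -
  define cls where "cls b = {l\<in>S. \<kappa> l = b}" for b
  have "\<forall>b. \<exists>h. bij_betw h {0..<card (cls b)} (cls b)"
    using \<open>finite S\<close> by (simp add: cls_def ex_bij_betw_nat_finite)
  then obtain e where e: "\<And>b. bij_betw (e b) {0..<card (cls b)} (cls b)"
    by metis
  define idx where "idx i = inv_into {0..<card (cls (\<kappa> i))} (e (\<kappa> i)) i" for i
  define \<sigma> where "\<sigma> i = (if i \<in> S then e (\<tau> (\<kappa> i)) (idx i) else i)" for i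
  have idx: "idx i \<in> {0..<card (cls (\<kappa> i))}" "e (\<kappa> i) (idx i) = i" if "i \<in> S" for i
  proof -
    have "i \<in> e (\<kappa> i) ` {0..<card (cls (\<kappa> i))}"
      using that e[of "\<kappa> i"] by (simp add: bij_betw_def cls_def)
    then show "idx i \<in> {0..<card (cls (\<kappa> i))}" and "e (\<kappa> i) (idx i) = i"
      unfolding idx_def by (rule inv_into_into, rule f_inv_into_f)
  qed
  have step: "\<sigma> i \<in> S \<and> \<kappa> (\<sigma> i) = \<tau> (\<kappa> i) \<and> idx (\<sigma> i) = idx i" if i: "i \<in> S" for i
  proof -
    obtain j where j: "j \<in> S" "\<kappa> j = \<tau> (\<kappa> i)"
      using closed[OF i] by blast
    have "card (cls (\<tau> (\<kappa> i))) = card (cls (\<kappa> i))"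
      using same_card[OF j(1) i] j(2) by (simp add: cls_def)
    then have bij: "bij_betw (e (\<tau> (\<kappa> i))) {0..<card (cls (\<kappa> i))} (cls (\<tau> (\<kappa> i)))"
      using e[of "\<tau> (\<kappa> i)"] by simp
    then have "\<sigma> i \<in> cls (\<tau> (\<kappa> i))"
      using idx(1)[OF i] i by (simp add: \<sigma>_def bij_betw_apply)
    moreover have "inv_into {0..<card (cls (\<kappa> i))} (e (\<tau> (\<kappa> i))) (\<sigma> i) = idx i"
      using bij idx(1)[OF i] i by (simp add: \<sigma>_def bij_betw_inv_into_left)
    ultimately show ?thesis
      using \<open>card (cls (\<tau> (\<kappa> i))) = card (cls (\<kappa> i))\<close> by (simp add: cls_def idx_def)
  qed
  have orbit: "(\<sigma> ^^ n) i \<in> S \<and> \<kappa> ((\<sigma> ^^ n) i) = (\<tau> ^^ n) (\<kappa> i) \<and> idx ((\<sigma> ^^ n) i) = idx i"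
    if "i \<in> S" for i n
  proof (induction n)
    case (Suc n)
    then show ?case
      using step[of "(\<sigma> ^^ n) i"] by simp
  qed (simp add: that)
  show ?thesis
  proof
    show "\<sigma> i \<in> S \<and> \<kappa> (\<sigma> i) = \<tau> (\<kappa> i)" if "i \<in> S" for i
      using step[OF that] by blast
    show "\<sigma> i = i" if "i \<notin> S" for i
      using that by (simp add: \<sigma>_def)
    show "\<sigma> ^^ k = id"
    proof
      fix i
      show "(\<sigma> ^^ k) i = id i"
      proof (cases "i \<in> S")
        case True
        then have "(\<sigma> ^^ k) i = e (\<kappa> i) (idx i)"
          using orbit[OF True, of k] periodic[OF True] idx(2)[of "(\<sigma> ^^ k) i"] by simp
        then show ?thesis
          using idx(2)[OF True] by simp
      next
        case False
        then have "(\<sigma> ^^ n) i = i" for n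
          by (induction n) (simp_all add: \<sigma>_def)
        then show ?thesis
          by simp
      qed
    qed
  qed
qed

lemma code_automorphism_coord_perm:
  fixes C :: "(bit ^ 'n) set" and B :: "bit ^ 'n \<Rightarrow> bit ^ 'n"
  assumes code: "linear_constant_weight_code C w"
    and B_closed: "\<And>v. v \<in> C \<Longrightarrow> B v \<in> C"
    and B_additive: "\<And>u v. u \<in> C \<Longrightarrow> v \<in> C \<Longrightarrow> B (u + v) = B u + B v"
    and B_periodic: "\<And>v. v \<in> C \<Longrightarrow> (B ^^ k) v = v" and "k > 0"
  obtains \<sigma> where "\<sigma> ^^ k = id" and "\<And>v i. v \<in> C \<Longrightarrow> v $ \<sigma> i = B v $ i"
proof -
  let ?S = "code_support C"
  define \<tau> where "\<tau> \<psi> = restrict (\<lambda>v. \<psi> (B v)) C" for \<psi> :: "bit ^ 'n \<Rightarrow> bit"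
  have B_coord_additive: "B (u + v) $ i = B u $ i + B v $ i" if "u \<in> C" "v \<in> C" for u v i
    by (simp only: B_additive[OF that] vector_add_component)
  have B_coord: "\<exists>u\<in>C. B u $ i = 1" if i: "i \<in> ?S" for i
  proof -
    obtain v where "v \<in> C" "v $ i = 1"
      using i by (auto simp: code_support_def)
    moreover have "v \<in> B ` C"
      using \<open>v \<in> C\<close> periodic_map_image_eq[OF B_closed B_periodic \<open>k > 0\<close>] by simp
    ultimately show ?thesis
      by auto
  qed
  have card_fiber: "card {l \<in> ?S. coord_fun C l = coord_fun C i} = 2 * w - card ?S"
    if i: "i \<in> ?S" for i
  proof -
    obtain u where u: "u \<in> C" "u $ i = 1"
      using i by (auto simp: code_support_def)
    show ?thesis
      using coord_fun_fiber[where \<phi> = "\<lambda>v. v $ i", OF u]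
        card_coord_class[where \<phi> = "\<lambda>v. v $ i", OF code vector_add_component u]
      by (simp add: coord_fun_def)
  qed
  have \<tau>_coord_fun: "\<tau> (coord_fun C i) = restrict (\<lambda>v. B v $ i) C" for i
    by (auto simp: \<tau>_def coord_fun_def B_closed intro: restrict_ext)
  obtain \<sigma> where \<sigma>: "\<And>i. i \<in> ?S \<Longrightarrow> \<sigma> i \<in> ?S \<and> coord_fun C (\<sigma> i) = \<tau> (coord_fun C i)"
    "\<And>i. i \<notin> ?S \<Longrightarrow> \<sigma> i = i" "\<sigma> ^^ k = id"
  proof (rule lift_label_map_to_perm[of ?S "coord_fun C" \<tau> k])
    show "card {l \<in> ?S. coord_fun C l = coord_fun C i} = card {l \<in> ?S. coord_fun C l = coord_fun C j}"
      if "i \<in> ?S" "j \<in> ?S" for i j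
      using card_fiber that by simp
    show "\<exists>j\<in>?S. coord_fun C j = \<tau> (coord_fun C i)" if i: "i \<in> ?S" for i
    proof -
      obtain u where u: "u \<in> C" "B u $ i = 1"
        using B_coord[OF i] by blast
      have "coord_class C (\<lambda>v. B v $ i) \<noteq> {}"
        by (rule coord_class_nonempty[where \<phi> = "\<lambda>v. B v $ i", OF code _ u])
          (simp add: B_coord_additive)
      then obtain j where "j \<in> coord_class C (\<lambda>v. B v $ i)"
        by blast
      then have "j \<in> ?S" "coord_fun C j = restrict (\<lambda>v. B v $ i) C"
        using coord_fun_fiber[where \<phi> = "\<lambda>v. B v $ i", OF u] by blast+
      then show ?thesis
        using \<tau>_coord_fun[of i] by auto
    qed
    show "(\<tau> ^^ k) (coord_fun C i) = coord_fun C i" for i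
      using funpow_restrict_pullback[where n = k and g = "\<lambda>v. v $ i", OF B_closed]
      by (auto simp: \<tau>_def [abs_def] coord_fun_def B_periodic intro: restrict_ext)
  qed auto
  show ?thesis
  proof
    show "\<sigma> ^^ k = id"
      using \<sigma>(3) .
    show "v $ \<sigma> i = B v $ i" if v: "v \<in> C" for v i
    proof (cases "i \<in> ?S")
      case True
      then have "coord_fun C (\<sigma> i) v = restrict (\<lambda>v. B v $ i) C v"
        using \<sigma>(1) \<tau>_coord_fun by simp
      then show ?thesis
        using v by (simp add: coord_fun_def)
    next
      case False
      then show ?thesis
        using v B_closed[OF v] \<sigma>(2) by (auto simp: code_support_def)
    qed
  qed
qed

lemma prime_dvd_card_PAut_of_code_automorphism:
  fixes C :: "(bit ^ 'n) set" and B :: "bit ^ 'n \<Rightarrow> bit ^ 'n"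
  assumes code: "linear_constant_weight_code C w"
    and B_closed: "\<And>v. v \<in> C \<Longrightarrow> B v \<in> C"
    and B_additive: "\<And>u v. u \<in> C \<Longrightarrow> v \<in> C \<Longrightarrow> B (u + v) = B u + B v"
    and B_periodic: "\<And>v. v \<in> C \<Longrightarrow> (B ^^ p) v = v" and p: "prime p"
    and b: "b \<in> C" "B b \<noteq> b"
  shows "p dvd card (PAut C)"
proof -
  have "p > 0"
    using p by (rule prime_gt_0_nat)
  obtain \<sigma> where \<sigma>: "\<sigma> ^^ p = id" "\<And>v i. v \<in> C \<Longrightarrow> v $ \<sigma> i = B v $ i"
    using code_automorphism_coord_perm[OF code B_closed B_additive B_periodic \<open>p > 0\<close>] by blast
  have "bij \<sigma>"
    using \<sigma>(1) \<open>p > 0\<close> by (rule bij_if_funpow_eq_id)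
  have undo_B: "perm_act \<sigma> (B v) = v" if "v \<in> C" for v
  proof -
    have "B v $ Hilbert_Choice.inv \<sigma> i = v $ i" for i
      using \<sigma>(2)[OF that, of "Hilbert_Choice.inv \<sigma> i"] surj_f_inv_f[OF bij_is_surj[OF \<open>bij \<sigma>\<close>]]
      by simp
    then show ?thesis
      by (simp add: perm_act_def vec_eq_iff)
  qed
  have "perm_act \<sigma> ` C = perm_act \<sigma> ` B ` C"
    using periodic_map_image_eq[OF B_closed B_periodic \<open>p > 0\<close>] by simp
  also have "\<dots> = C"
    using undo_B by (simp add: image_image)
  finally have "perm_act \<sigma> ` C = C" .
  moreover have "\<sigma> permutes UNIV"
    using \<open>bij \<sigma>\<close> by (rule bij_imp_permutes) simp
  ultimately have "\<sigma> \<in> PAut C"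
    by (simp add: PAut_def)
  moreover have "\<sigma> \<noteq> id"
    using undo_B[OF b(1)] b(2) by (auto simp: perm_act_id)
  ultimately show ?thesis
    using prime_dvd_card_PAut \<sigma>(1) p by blast
qed

section \<open>Automorphisms of order two and three\<close>

lemma two_distinct_nonzero_vectors:
  fixes C :: "('a :: field ^ 'n) set"
  assumes "vec.dim C \<ge> 2"
  obtains a b where "a \<in> C" "b \<in> C" "a \<noteq> 0" "b \<noteq> 0" "a \<noteq> b"
proof -
  obtain B where B: "B \<subseteq> C" "vec.independent B" "card B = vec.dim C"
    using vec.basis_exists[of C] by metis
  have card_B: "card B \<ge> 2"
    using B(3) assms by (simp only:)
  then obtain a where a: "a \<in> B"
    by (metis card.empty all_not_in_conv not_numeral_le_zero)
  have "card (B - {a}) \<ge> 1"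
    using card_Diff_singleton[OF a] card_B by simp
  then obtain b where b: "b \<in> B - {a}"
    by (metis card.empty all_not_in_conv not_one_le_zero)
  have "0 \<notin> B"
    using B(2) vec.dependent_zero by blast
  then show ?thesis
    using that a b B(1) by blast
qed

lemma vec_bit_add_eq_0_iff: "(u :: bit ^ 'n) + v = 0 \<longleftrightarrow> u = v"
proof
  assume "u + v = 0"
  then have "u + v + v = v"
    by simp
  then show "u = v"
    by (simp add: add.assoc)
qed simp

lemma support_add:
  fixes u v :: "bit ^ 'n"
  shows "{i. (u + v) $ i = 1} = ({i. u $ i = 1} - {i. v $ i = 1}) \<union> ({i. v $ i = 1} - {i. u $ i = 1})"
proof -
  have "(u + v) $ i = 1 \<longleftrightarrow> (u $ i = 1 \<and> v $ i \<noteq> 1) \<or> (v $ i = 1 \<and> u $ i \<noteq> 1)" for i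
    by (cases "u $ i"; cases "v $ i") simp_all
  then show ?thesis
    by blast
qed

lemma supports_intersect:
  fixes a b :: "bit ^ 'n"
  assumes "hweight a = w" "hweight b = w" "hweight (a + b) = w" "a \<noteq> 0"
  shows "\<exists>q. a $ q = 1 \<and> b $ q = 1"
proof (rule ccontr)
  assume "\<not> ?thesis"
  then have disjoint: "{i. a $ i = 1} \<inter> {i. b $ i = 1} = {}"
    by blast
  then have "{i. (a + b) $ i = 1} = {i. a $ i = 1} \<union> {i. b $ i = 1}"
    unfolding support_add by blast
  then have "hweight (a + b) = hweight a + hweight b"
    using disjoint by (simp add: hweight_eq_card_ones card_Un_disjoint)
  then have "hweight a = 0"
    using assms(1-3) by simp
  then show False
    using assms(4) by (simp add: hweight_eq_0_iff)
qed

lemma support_not_subset: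
  fixes a b :: "bit ^ 'n"
  assumes "hweight a = w" "hweight b = w" "a \<noteq> b"
  shows "\<exists>p. a $ p = 0 \<and> b $ p = 1"
proof (rule ccontr)
  assume "\<not> ?thesis"
  then have "{i. b $ i = 1} \<subseteq> {i. a $ i = 1}"
    by auto
  moreover have "card {i. b $ i = 1} = card {i. a $ i = 1}"
    using assms(1,2) by (simp add: hweight_eq_card_ones)
  ultimately have same_support: "{i. b $ i = 1} = {i. a $ i = 1}"
    by (simp add: card_subset_eq)
  have "a $ i = b $ i" for i
  proof -
    have "b $ i = 1 \<longleftrightarrow> a $ i = 1"
      using same_support by blast
    then show ?thesis
      by (cases "a $ i"; cases "b $ i") simp_all
  qed
  then have "a = b"
    by (simp add: vec_eq_iff)
  then show False
    using assms(3) by simp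
qed

lemma coord_shear_additive:
  fixes u v a :: "'a :: ring ^ 'n"
  shows "(u + v) + ((u + v) $ p) *s a = (u + (u $ p) *s a) + (v + (v $ p) *s a)"
  by (simp add: vector_sadd_rdistrib algebra_simps)

lemma coord_shear2_additive:
  fixes u v a b :: "'a :: ring ^ 'n"
  shows "(u + v) + ((u + v) $ p) *s a + ((u + v) $ q) *s b
    = (u + (u $ p) *s a + (u $ q) *s b) + (v + (v $ p) *s a + (v $ q) *s b)"
  by (simp add: vector_sadd_rdistrib algebra_simps)

lemma transvection_funpow_2:
  fixes a :: "bit ^ 'n"
  assumes "a $ p = 0"
  shows "((\<lambda>v. v + (v $ p) *s a) ^^ 2) v = v"
proof -
  have "v $ j + v $ p * a $ j + (v $ p + v $ p * a $ p) * a $ j = v $ j" for j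
    using assms by (cases "v $ p"; cases "a $ j") simp_all
  then show ?thesis
    by (simp add: numeral_2_eq_2 vec_eq_iff)
qed

lemma transvection_pair_funpow_3:
  fixes a b :: "bit ^ 'n"
  assumes "a $ p = 0" "b $ p = 1" "a $ q = 1" "b $ q = 1"
  shows "((\<lambda>v. v + (v $ p) *s a + (v $ q) *s b) ^^ 3) v = v"
proof -
  let ?T = "\<lambda>v. v + (v $ p) *s a + (v $ q) *s b"
  have T: "?T v $ j = v $ j + v $ p * a $ j + v $ q * b $ j" for v j
    by simp
  have Tp: "?T v $ p = v $ p + v $ q" and Tq: "?T v $ q = v $ p" for v
    using assms by (simp_all add: T) (cases "v $ p"; cases "v $ q"; simp)
  have "?T (?T (?T v)) $ j = v $ j" for j
    unfolding T[of "?T (?T v)"] T[of "?T v"] Tp Tq T[of v] using assms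
    by (cases "v $ j"; cases "v $ p"; cases "v $ q"; cases "a $ j"; cases "b $ j") simp_all
  then show ?thesis
    by (simp add: numeral_3_eq_3 vec_eq_iff)
qed

lemma two_dvd_card_PAut:
  fixes C :: "(bit ^ 'n) set"
  assumes code: "linear_constant_weight_code C w"
    and ab: "a \<in> C" "b \<in> C" "a \<noteq> 0" and p: "a $ p = 0" "b $ p = 1"
  shows "2 dvd card (PAut C)"
proof (rule prime_dvd_card_PAut_of_code_automorphism[OF code, of _ _ b])
  have sub: "vec.subspace C"
    using code by (simp add: linear_constant_weight_code_def)
  show "v + (v $ p) *s a \<in> C" if "v \<in> C" for v
    using that ab(1) vec.subspace_add[OF sub] vec.subspace_scale[OF sub] by simp
  show "(u + v) + ((u + v) $ p) *s a = (u + (u $ p) *s a) + (v + (v $ p) *s a)" for u v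
    by (rule coord_shear_additive)
  show "((\<lambda>v. v + (v $ p) *s a) ^^ 2) v = v" for v
    using p(1) by (rule transvection_funpow_2)
  show "b + (b $ p) *s a \<noteq> b"
    using ab(3) p(2) by simp
qed (simp_all add: ab(2))

lemma three_dvd_card_PAut:
  fixes C :: "(bit ^ 'n) set"
  assumes code: "linear_constant_weight_code C w"
    and ab: "a \<in> C" "b \<in> C" and pq: "a $ p = 0" "b $ p = 1" "a $ q = 1" "b $ q = 1"
  shows "3 dvd card (PAut C)"
proof (rule prime_dvd_card_PAut_of_code_automorphism[OF code, of _ _ b])
  have sub: "vec.subspace C"
    using code by (simp add: linear_constant_weight_code_def)
  show "v + (v $ p) *s a + (v $ q) *s b \<in> C" if "v \<in> C" for v
    using that ab vec.subspace_add[OF sub] vec.subspace_scale[OF sub] by simp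
  show "(u + v) + ((u + v) $ p) *s a + ((u + v) $ q) *s b
    = (u + (u $ p) *s a + (u $ q) *s b) + (v + (v $ p) *s a + (v $ q) *s b)" for u v
    by (rule coord_shear2_additive)
  show "((\<lambda>v. v + (v $ p) *s a + (v $ q) *s b) ^^ 3) v = v" for v
    using pq by (rule transvection_pair_funpow_3)
  show "b + (b $ p) *s a + (b $ q) *s b \<noteq> b"
    using pq by (simp add: vec_eq_iff exI[of _ p])
qed (simp_all add: ab(2))

theorem corollary5p3:
  fixes C :: "(bit ^ 'n) set" and w :: nat
  assumes "linear_constant_weight_code C w"
    and "vec.dim C \<ge> 2"
  shows "6 dvd card (PAut C)"
proof -
  have sub: "vec.subspace C" and weight: "\<And>v. v \<in> C \<Longrightarrow> v \<noteq> 0 \<Longrightarrow> hweight v = w"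
    using assms(1) by (auto simp: linear_constant_weight_code_def)
  obtain a b where ab: "a \<in> C" "b \<in> C" "a \<noteq> 0" "b \<noteq> 0" "a \<noteq> b"
    using two_distinct_nonzero_vectors[OF assms(2)] .
  have "a + b \<in> C" "a + b \<noteq> 0"
    using ab vec.subspace_add[OF sub] by (simp_all add: vec_bit_add_eq_0_iff)
  then obtain q where q: "a $ q = 1" "b $ q = 1"
    using supports_intersect weight ab by metis
  obtain p where p: "a $ p = 0" "b $ p = 1"
    using support_not_subset weight ab by metis
  have "2 dvd card (PAut C)"
    using two_dvd_card_PAut[OF assms(1) ab(1-3) p] .
  moreover have "3 dvd card (PAut C)"
    using three_dvd_card_PAut[OF assms(1) ab(1,2) p q] .
  ultimately show ?thesis
    by presburger
qed

end
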